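(* Let $b(v,s)$ be the Dutch-phase equilibrium bidding function. It is the solution of $$\frac{\partial b(v,s)}{\partial v}=\frac{g(v)}{G(v)}\,\frac{c(s-b(v,s))v-b(v,s)}{1+c'(s-b(v,s))v},\qquad b(0,s)=0,$$ assumed increasing in $v$ and sufficiently smooth that mixed partial derivatives commute. Then $\frac{\partial b(v,s)}{\partial s}<1$ for all relevant $v$ and $s$.
   Context: Values are i.i.d. on $[0,1]$ with twice differentiable CDF $F$ and density $f$; $n\ge2$ bidders. Write $G=F^{n-1}$ and $g=G'$. Time cost: $c:[0,1]\to\mathbb{R}_+$ differentiable with $c(0)=1$ and $c'>-1$, and either $c\equiv1$ or $c'<0$ everywhere. It is also assumed twice differentiable, as the argument uses $c''$. $s\in[0,1]$ is the starting price of an Istanbul Flower Auction. A winner with value $v$ paying $p$ after duration $t$ gets $c(t)v-p$, and the Dutch phase descends from $s$, so its duration is $s-b$. *)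

theory Defs
  imports "HOL-Analysis.Analysis"
begin

end

theory Submission
  imports Defs
begin

text \<open>Fix \<open>s\<close> and put \<open>m(v) = (1 - \<partial>b/\<partial>s) (1 + c'(s - b) v)\<close>. Differentiating the
  bidding equation in \<open>s\<close> and exchanging the mixed partials, the terms involving \<open>c''\<close>
  cancel and \<open>m\<close> solves \<open>m' = c'/(1 + c' v) m + (g/G) (1 - m)\<close> with \<open>m(0) = 1\<close> and
  \<open>g/G \<ge> 0\<close>. As \<open>c' > -1\<close> on a compact interval, the first coefficient is bounded below
  by some \<open>-K\<close>, so wherever \<open>0 < m < 1\<close> we have \<open>m' \<ge> -K m\<close> and \<open>m e\<^sup>K\<^sup>v\<close> is
  nondecreasing; hence \<open>m\<close> cannot fall from \<open>1\<close> to \<open>0\<close>. Since \<open>1 + c' v > 0\<close>, this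
  gives \<open>\<partial>b/\<partial>s < 1\<close>.\<close>

lemma one_plus_mult_pos:
  fixes e x :: real
  assumes "e > -1" "0 \<le> x" "x \<le> 1"
  shows "0 < 1 + e * x"
proof (cases "e \<ge> 0")
  case False
  then have "e \<le> e * x" using assms by (simp add: mult_le_cancel_left1)
  then show ?thesis using assms by linarith
qed (use assms in \<open>simp add: add_pos_nonneg\<close>)

lemma ratio_lower_bound:
  fixes d e x :: real
  assumes "d > -1" "e \<ge> d" "0 \<le> x" "x \<le> 1"
  shows "- 1 / (1 + d) \<le> e / (1 + e * x)"
proof (cases "e \<ge> 0")
  case True
  then have "0 \<le> e / (1 + e * x)" using assms by simp
  moreover have "- 1 / (1 + d) \<le> 0" using assms by simp
  ultimately show ?thesis by linarith
next
  case False
  have "e \<le> e * x" using False assms by (simp add: mult_le_cancel_left1)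
  then have "1 + d \<le> 1 + e * x" using assms by linarith
  then have "e / (1 + d) \<le> e / (1 + e * x)"
    using False assms by (intro divide_left_mono_neg) auto
  moreover have "- 1 / (1 + d) \<le> e / (1 + d)"
    using assms by (intro divide_right_mono) auto
  ultimately show ?thesis by linarith
qed

text \<open>The \<open>c''\<close> terms cancel here, so no bound on \<open>c''\<close> is needed.\<close>

lemma margin_derivative_identity:
  fixes D e x H N dd W :: real
  assumes "W = 1 + e * x" "W \<noteq> 0"
  shows "D * (e - dd * (H * (N / W)) * x) - H * (((e * D * x - (1 - D)) * W - N * (dd * D * x)) / W\<^sup>2) * W
         = e / W * (D * W) + H * (1 - D * W)"
proof -
  have "D * (e - dd * (H * (N / W)) * x) - H * (((e * D * x - (1 - D)) * W - N * (dd * D * x)) / W\<^sup>2) * W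
        = D * e - H * (e * D * x - (1 - D))"
    using assms(2) by (simp add: field_simps power2_eq_square)
  also have "\<dots> = D * e + H * (1 - D * W)"
    unfolding assms(1) by (simp add: algebra_simps)
  also have "D * e = e / W * (D * W)"
    using assms(2) by simp
  finally show ?thesis .
qed

lemma crossing_interval:
  fixes M :: "real \<Rightarrow> real"
  assumes cont: "continuous_on {a..b} M" and "a \<le> b" "1 \<le> M a" "M b \<le> 0"
  obtains v1 v0 where "a \<le> v1" "v1 < v0" "v0 \<le> b" "M v0 = 0" "1 \<le> M v1"
    "\<And>x. x \<in> {v1<..<v0} \<Longrightarrow> 0 < M x \<and> M x < 1"
proof -
  define S where "S = {a..b} \<inter> M -` {..0}"
  have "compact S"
    unfolding S_def compact_eq_bounded_closed
    by (auto intro: bounded_subset[of "{a..b}"] continuous_closed_preimage[OF cont])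
  moreover have "b \<in> S" using assms by (auto simp: S_def)
  ultimately obtain v0 where v0: "v0 \<in> S" and v0_least: "\<And>y. y \<in> S \<Longrightarrow> v0 \<le> y"
    using compact_attains_inf[of S] by blast
  then have v0_range: "a \<le> v0" "v0 \<le> b" "M v0 \<le> 0" by (auto simp: S_def)
  have cont_v0: "continuous_on {a..v0} M" by (rule continuous_on_subset[OF cont]) (use v0_range in auto)
  then obtain z where z: "a \<le> z" "z \<le> v0" "M z = 0"
    using IVT2'[of M v0 0 a] v0_range assms(3) by auto
  then have "z \<in> S" using v0_range by (auto simp: S_def)
  with z v0_least have Mv0: "M v0 = 0" by force
  define T where "T = {a..v0} \<inter> M -` {1..}"
  have "compact T"
    unfolding T_def compact_eq_bounded_closed
    by (auto intro: bounded_subset[of "{a..v0}"] continuous_closed_preimage[OF cont_v0])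
  moreover have "a \<in> T" using v0_range assms(3) by (auto simp: T_def)
  ultimately obtain v1 where v1: "v1 \<in> T" and v1_greatest: "\<And>y. y \<in> T \<Longrightarrow> y \<le> v1"
    using compact_attains_sup[of T] by blast
  then have v1_range: "a \<le> v1" "v1 \<le> v0" "1 \<le> M v1" by (auto simp: T_def)
  then have "v1 < v0" using Mv0 by (cases "v1 = v0") auto
  moreover have "0 < M x \<and> M x < 1" if "x \<in> {v1<..<v0}" for x
  proof
    show "0 < M x" using that v0_least[of x] v1_range v0_range by (force simp: S_def)
    show "M x < 1" using that v1_greatest[of x] v1_range v0_range by (force simp: T_def)
  qed
  ultimately show ?thesis using that v0_range v1_range Mv0 by blast
qed

lemma DERIV_lower_linear_imp_pos:
  fixes M M' :: "real \<Rightarrow> real"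
  assumes "v1 \<le> v0" "continuous_on {v1..v0} M"
    and "\<And>x. x \<in> {v1<..<v0} \<Longrightarrow> (M has_real_derivative M' x) (at x)"
    and "\<And>x. x \<in> {v1<..<v0} \<Longrightarrow> - K * M x \<le> M' x"
    and "0 < M v1"
  shows "0 < M v0"
proof -
  define E where "E x = M x * exp (K * x)" for x
  have "E v1 \<le> E v0"
  proof (rule DERIV_nonneg_imp_increasing_open[OF assms(1)])
    show "continuous_on {v1..v0} E" unfolding E_def by (intro continuous_intros assms(2))
    fix x assume "v1 < x" "x < v0"
    then have x: "x \<in> {v1<..<v0}" by simp
    have "(E has_real_derivative (M' x + K * M x) * exp (K * x)) (at x)"
      unfolding E_def by (auto intro!: derivative_eq_intros assms(3)[OF x] simp: algebra_simps)
    moreover have "0 \<le> (M' x + K * M x) * exp (K * x)" using assms(4)[OF x] by simp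
    ultimately show "\<exists>y. (E has_real_derivative y) (at x) \<and> 0 \<le> y" by blast
  qed
  moreover have "0 < E v1" using assms(5) by (simp add: E_def)
  ultimately have "0 < E v0" by linarith
  then show ?thesis by (simp add: E_def zero_less_mult_iff)
qed

lemma relaxation_ode_solution_pos:
  fixes M \<alpha> \<beta> :: "real \<Rightarrow> real"
  assumes "a \<le> b" "continuous_on {a..b} M" "M a = 1"
    and deriv: "\<And>x. x \<in> {a<..<b} \<Longrightarrow> (M has_real_derivative \<alpha> x * M x + \<beta> x * (1 - M x)) (at x)"
    and "\<And>x. x \<in> {a<..<b} \<Longrightarrow> - K \<le> \<alpha> x"
    and "\<And>x. x \<in> {a<..<b} \<Longrightarrow> 0 \<le> \<beta> x"
  shows "0 < M b"
proof (rule ccontr)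
  assume "\<not> 0 < M b"
  then obtain v1 v0 where v: "a \<le> v1" "v1 < v0" "v0 \<le> b" "M v0 = 0" "1 \<le> M v1"
    and between: "\<And>x. x \<in> {v1<..<v0} \<Longrightarrow> 0 < M x \<and> M x < 1"
    using crossing_interval[OF assms(2,1)] assms(3) by (metis order.refl not_less)
  have "0 < M v0"
  proof (rule DERIV_lower_linear_imp_pos[of v1 v0 M "\<lambda>x. \<alpha> x * M x + \<beta> x * (1 - M x)" K])
    show "continuous_on {v1..v0} M" by (rule continuous_on_subset[OF assms(2)]) (use v in auto)
    fix x assume x: "x \<in> {v1<..<v0}"
    then have ab: "x \<in> {a<..<b}" using v by auto
    then show "(M has_real_derivative \<alpha> x * M x + \<beta> x * (1 - M x)) (at x)" by (rule deriv)
    have "- K * M x \<le> \<alpha> x * M x" using mult_right_mono[OF assms(5)[OF ab], of "M x"] between[OF x] by simp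
    moreover have "0 \<le> \<beta> x * (1 - M x)" using assms(6)[OF ab] between[OF x] by simp
    ultimately show "- K * M x \<le> \<alpha> x * M x + \<beta> x * (1 - M x)" by linarith
  qed (use v in auto)
  with v show False by simp
qed

lemma margin_has_derivative:
  fixes b bv bs bvs :: "real \<Rightarrow> real \<Rightarrow> real" and c dc ddc :: "real \<Rightarrow> real"
    and x s H :: real and U :: "real set"
  defines "t \<equiv> s - b x s" and "W \<equiv> 1 + dc (s - b x s) * x"
  assumes b_dv: "((\<lambda>w. b w s) has_real_derivative bv x s) (at x)"
    and bs_dv: "((\<lambda>w. bs w s) has_real_derivative bvs x s) (at x)"
    and b_ds: "((\<lambda>r. b x r) has_real_derivative bs x s) (at s)"
    and bv_ds: "((\<lambda>r. bv x r) has_real_derivative bvs x s) (at s)"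
    and c: "(c has_real_derivative dc t) (at t)"
    and dc: "(dc has_real_derivative ddc t) (at t)"
    and U: "open U" "s \<in> U"
    and ode: "\<And>r. r \<in> U \<Longrightarrow> bv x r = H * ((c (r - b x r) * x - b x r) / (1 + dc (r - b x r) * x))"
    and W: "W \<noteq> 0"
  shows "((\<lambda>v. (1 - bs v s) * (1 + dc (s - b v s) * v)) has_real_derivative
           dc t / W * ((1 - bs x s) * W) + H * (1 - (1 - bs x s) * W)) (at x)"
proof -
  define D where "D = 1 - bs x s"
  define N where "N = c t * x - b x s"
  have t_ds: "((\<lambda>r. r - b x r) has_real_derivative D) (at s)"
    unfolding D_def using DERIV_diff[OF DERIV_ident b_ds] by simp
  have "((\<lambda>r. H * ((c (r - b x r) * x - b x r) / (1 + dc (r - b x r) * x))) has_real_derivative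
          H * (((dc t * D * x - bs x s) * W - N * (ddc t * D * x)) / W\<^sup>2)) (at s)"
    using W unfolding t_def W_def N_def
    by (auto intro!: derivative_eq_intros DERIV_chain2[OF c[unfolded t_def] t_ds]
          DERIV_chain2[OF dc[unfolded t_def] t_ds] b_ds simp: power2_eq_square algebra_simps)
  then have "((\<lambda>r. bv x r) has_real_derivative
               H * (((dc t * D * x - bs x s) * W - N * (ddc t * D * x)) / W\<^sup>2)) (at s)"
    by (rule has_field_derivative_transform_within_open[OF _ U]) (simp add: ode)
  with bv_ds have bvs: "bvs x s = H * (((dc t * D * x - (1 - D)) * W - N * (ddc t * D * x)) / W\<^sup>2)"
    unfolding D_def by (simp add: DERIV_unique)
  have bv: "bv x s = H * (N / W)"
    using ode[OF U(2)] unfolding N_def t_def W_def .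
  have t_dv: "((\<lambda>v. s - b v s) has_real_derivative - bv x s) (at x)"
    using DERIV_diff[OF DERIV_const b_dv] by simp
  have "((\<lambda>v. (1 - bs v s) * (1 + dc (s - b v s) * v)) has_real_derivative
          D * (dc t - ddc t * bv x s * x) - bvs x s * W) (at x)"
    unfolding D_def W_def t_def
    by (auto intro!: derivative_eq_intros DERIV_chain2[OF dc[unfolded t_def] t_dv] bs_dv
        simp: algebra_simps)
  also have "D * (dc t - ddc t * bv x s * x) - bvs x s * W = dc t / W * (D * W) + H * (1 - D * W)"
    unfolding bv bvs using W by (intro margin_derivative_identity) (simp_all add: W_def t_def)
  finally show ?thesis unfolding D_def .
qed

lemma at_within_unit_interval: "y \<in> {0<..<1} \<Longrightarrow> at y within {0..1} = at (y :: real)"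
  using at_within_Icc_at[of 0 y 1] by simp

locale dutch_phase =
  fixes n :: nat and F f c dc ddc :: "real \<Rightarrow> real" and b bv bs bvs :: "real \<Rightarrow> real \<Rightarrow> real"
  assumes F0: "F 0 = 0" and F_mono: "mono_on {0..1} F"
    and F_deriv: "\<forall>x\<in>{0..1}. (F has_real_derivative f x) (at x within {0..1})"
    and c_deriv: "\<forall>t\<in>{0..1}. (c has_real_derivative dc t) (at t within {0..1})"
    and dc_deriv: "\<forall>t\<in>{0..1}. (dc has_real_derivative ddc t) (at t within {0..1})"
    and dc_gt: "\<forall>t\<in>{0..1}. dc t > -1"
    and b_dv: "\<forall>v\<in>{0..1}. \<forall>s\<in>{0..1}.
                 ((\<lambda>w. b w s) has_real_derivative bv v s) (at v within {0..1})"
    and b_ds: "\<forall>v\<in>{0..1}. \<forall>s\<in>{0..1}.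
                 ((\<lambda>r. b v r) has_real_derivative bs v s) (at s within {0..1})"
    and bv_ds: "\<forall>v\<in>{0..1}. \<forall>s\<in>{0..1}.
                 ((\<lambda>r. bv v r) has_real_derivative bvs v s) (at s within {0..1})"
    and bs_dv: "\<forall>v\<in>{0..1}. \<forall>s\<in>{0..1}.
                 ((\<lambda>w. bs w s) has_real_derivative bvs v s) (at v within {0..1})"
    and b_incr: "\<forall>s\<in>{0..1}. strict_mono_on {0..1} (\<lambda>v. b v s)"
    and b_init: "\<forall>s\<in>{0..1}. b 0 s = 0"
    and b_ode: "\<forall>v\<in>{0<..1}. \<forall>s\<in>{0..1}. s - b v s \<in> {0..1} \<longrightarrow>
                 bv v s = (real (n - 1) * F v ^ (n - 2) * f v) / (F v ^ (n - 1))
                          * ((c (s - b v s) * v - b v s) / (1 + dc (s - b v s) * v))"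
begin

definition reverse_hazard :: "real \<Rightarrow> real" where
  "reverse_hazard x = real (n - 1) * F x ^ (n - 2) * f x / F x ^ (n - 1)"

definition margin :: "real \<Rightarrow> real \<Rightarrow> real" where
  "margin s v = (1 - bs v s) * (1 + dc (s - b v s) * v)"

lemma reverse_hazard_nonneg:
  assumes "x \<in> {0<..<1}"
  shows "0 \<le> reverse_hazard x"
proof -
  have "(F has_real_derivative f x) (at x)"
    using F_deriv[rule_format, of x] assms at_within_unit_interval[OF assms] by simp
  then have "0 \<le> f x" using mono_on_imp_deriv_nonneg[OF F_mono] assms by simp
  moreover have "0 \<le> F x" using mono_onD[OF F_mono, of 0 x] F0 assms by simp
  ultimately show ?thesis by (simp add: reverse_hazard_def)
qed

lemma b_nonneg:
  assumes "v \<in> {0..1}" "r \<in> {0..1}"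
  shows "0 \<le> b v r"
  using b_init strict_mono_onD[OF b_incr[rule_format, OF assms(2)], of 0 v] assms
  by (cases "v = 0") auto

lemma dc_lower_bound:
  obtains d where "- 1 < d" "\<And>t. t \<in> {0..1} \<Longrightarrow> d \<le> dc t"
proof -
  have dc_cont: "continuous_on {0..1} dc"
    using DERIV_continuous_on dc_deriv by blast
  obtain t0 where t0: "t0 \<in> {0..1}" "\<And>t. t \<in> {0..1} \<Longrightarrow> dc t0 \<le> dc t"
    using continuous_attains_inf[OF compact_Icc _ dc_cont] by fastforce
  show ?thesis
    by (rule that[of "dc t0"]) (use t0 dc_gt in auto)
qed

lemma margin_continuous:
  assumes "s \<in> {0..1}" "V \<le> 1" and t_range: "\<And>v. v \<in> {0..V} \<Longrightarrow> s - b v s \<in> {0..1}"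
  shows "continuous_on {0..V} (margin s)"
proof -
  have dc_cont: "continuous_on {0..1} dc"
    using DERIV_continuous_on dc_deriv by blast
  have "continuous_on {0..1} (\<lambda>v. b v s)"
    by (rule DERIV_continuous_on[where D = "\<lambda>v. bv v s"]) (use b_dv assms(1) in blast)
  then have "continuous_on {0..V} (\<lambda>v. s - b v s)"
    using assms(2) by (auto intro!: continuous_intros intro: continuous_on_subset)
  then have dc_t_cont: "continuous_on {0..V} (\<lambda>v. dc (s - b v s))"
    by (rule continuous_on_compose2[OF dc_cont]) (use t_range in auto)
  have "continuous_on {0..1} (\<lambda>v. bs v s)"
    by (rule DERIV_continuous_on[where D = "\<lambda>v. bvs v s"]) (use bs_dv assms(1) in blast)
  then have "continuous_on {0..V} (\<lambda>v. bs v s)"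
    using assms(2) by (auto intro: continuous_on_subset)
  with dc_t_cont show ?thesis
    unfolding margin_def by (intro continuous_intros)
qed

lemma margin_at_zero:
  assumes "s \<in> {0<..<1}"
  shows "margin s 0 = 1"
proof -
  have "((\<lambda>r. b 0 r) has_real_derivative 0) (at s)"
    by (rule has_field_derivative_transform_within_open[of "\<lambda>r. 0" _ _ "{0<..<1}"])
       (use assms b_init in auto)
  moreover have "((\<lambda>r. b 0 r) has_real_derivative bs 0 s) (at s)"
    using b_ds[rule_format, of 0 s] assms at_within_unit_interval[OF assms] by simp
  ultimately have "bs 0 s = 0" by (metis DERIV_unique)
  then show ?thesis by (simp add: margin_def)
qed

lemma margin_has_derivative_at:
  assumes xI: "x \<in> {0<..<1}" and s: "s \<in> {0<..<1}" and tI: "s - b x s \<in> {0<..<1}"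
  shows "(margin s has_real_derivative
           dc (s - b x s) / (1 + dc (s - b x s) * x) * margin s x
           + reverse_hazard x * (1 - margin s x)) (at x)"
proof -
  have sI: "s \<in> {0..1}" and xI': "x \<in> {0..1}" using s xI by auto
  note at_x = at_within_unit_interval[OF xI] and at_s = at_within_unit_interval[OF s]
    and at_t = at_within_unit_interval[OF tI]
  have "continuous_on {0..1} (\<lambda>r. b x r)"
    by (rule DERIV_continuous_on[where D = "\<lambda>r. bs x r"]) (use b_ds xI' in blast)
  then have "continuous_on {0<..<1} (\<lambda>r. r - b x r)"
    by (auto intro!: continuous_intros intro: continuous_on_subset)
  then have U: "open ({0<..<1} \<inter> (\<lambda>r. r - b x r) -` {0<..})"
    by (rule continuous_open_preimage) auto
  show ?thesis
    unfolding margin_def[abs_def]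
  proof (rule margin_has_derivative[OF _ _ _ _ _ _ U])
    show "((\<lambda>w. b w s) has_real_derivative bv x s) (at x)"
      using b_dv[rule_format, of x s] xI sI at_x by simp
    show "((\<lambda>w. bs w s) has_real_derivative bvs x s) (at x)"
      using bs_dv[rule_format, of x s] xI sI at_x by simp
    show "((\<lambda>r. b x r) has_real_derivative bs x s) (at s)"
      using b_ds[rule_format, of x s] xI sI at_s by simp
    show "((\<lambda>r. bv x r) has_real_derivative bvs x s) (at s)"
      using bv_ds[rule_format, of x s] xI sI at_s by simp
    show "(c has_real_derivative dc (s - b x s)) (at (s - b x s))"
      using c_deriv[rule_format, of "s - b x s"] tI at_t by simp
    show "(dc has_real_derivative ddc (s - b x s)) (at (s - b x s))"
      using dc_deriv[rule_format, of "s - b x s"] tI at_t by simp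
    show "s \<in> {0<..<1} \<inter> (\<lambda>r. r - b x r) -` {0<..}"
      using s tI by simp
    show "1 + dc (s - b x s) * x \<noteq> 0"
      using one_plus_mult_pos[of "dc (s - b x s)" x] dc_gt[rule_format, of "s - b x s"] tI xI
      by simp
    fix r assume "r \<in> {0<..<1} \<inter> (\<lambda>r. r - b x r) -` {0<..}"
    then show "bv x r = reverse_hazard x * ((c (r - b x r) * x - b x r) / (1 + dc (r - b x r) * x))"
      using b_ode[rule_format, of x r] b_nonneg[of x r] xI by (simp add: reverse_hazard_def)
  qed
qed

lemma margin_pos:
  assumes V: "V \<in> {0..1}" and s: "s \<in> {0<..<1}" and below: "\<forall>w\<in>{0..V}. b w s < s"
  shows "0 < margin s V"
proof -
  have t_range: "s - b v s \<in> {0<..<1}" if "v \<in> {0..V}" for v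
    using b_nonneg[of v s] below that V s by auto
  obtain d where d: "- 1 < d" "\<And>t. t \<in> {0..1} \<Longrightarrow> d \<le> dc t"
    using dc_lower_bound by blast
  show ?thesis
  proof (rule relaxation_ode_solution_pos[of 0 V "margin s" _ _ "1 / (1 + d)"])
    show "continuous_on {0..V} (margin s)"
      by (rule margin_continuous) (use s V t_range in \<open>auto intro: less_imp_le\<close>)
    show "margin s 0 = 1" using margin_at_zero[OF s] .
  next
    fix x assume "x \<in> {0<..<V}"
    then have xI: "x \<in> {0<..<1}" and tI: "s - b x s \<in> {0<..<1}" using V t_range[of x] by auto
    show "- (1 / (1 + d)) \<le> dc (s - b x s) / (1 + dc (s - b x s) * x)"
      using ratio_lower_bound[of d "dc (s - b x s)" x] d tI xI by simp
    show "0 \<le> reverse_hazard x" using reverse_hazard_nonneg[OF xI] .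
    show "(margin s has_real_derivative dc (s - b x s) / (1 + dc (s - b x s) * x) * margin s x
            + reverse_hazard x * (1 - margin s x)) (at x)"
      using margin_has_derivative_at[OF xI s tI] .
  qed (use V in auto)
qed

end

theorem lemma2:
  fixes n :: nat
    and F f df :: "real \<Rightarrow> real"
    and c dc ddc :: "real \<Rightarrow> real"
    and b bv bs bvs :: "real \<Rightarrow> real \<Rightarrow> real"
  assumes n: "n \<ge> 2"
    and F_cdf: "F 0 = 0" "F 1 = 1" "mono_on {0..1} F"
    and F_deriv: "\<forall>x\<in>{0..1}. (F has_real_derivative f x) (at x within {0..1})"
    and f_deriv: "\<forall>x\<in>{0..1}. (f has_real_derivative df x) (at x within {0..1})"
    and c_deriv: "\<forall>t\<in>{0..1}. (c has_real_derivative dc t) (at t within {0..1})"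
    and dc_deriv: "\<forall>t\<in>{0..1}. (dc has_real_derivative ddc t) (at t within {0..1})"
    and c_nonneg: "\<forall>t\<in>{0..1}. c t \<ge> 0"
    and c0: "c 0 = 1"
    and dc_gt: "\<forall>t\<in>{0..1}. dc t > -1"
    and c_cases: "(\<forall>t\<in>{0..1}. c t = 1) \<or> (\<forall>t\<in>{0..1}. dc t < 0)"
    and b_dv: "\<forall>v\<in>{0..1}. \<forall>s\<in>{0..1}.
                 ((\<lambda>w. b w s) has_real_derivative bv v s) (at v within {0..1})"
    and b_ds: "\<forall>v\<in>{0..1}. \<forall>s\<in>{0..1}.
                 ((\<lambda>r. b v r) has_real_derivative bs v s) (at s within {0..1})"
    and bv_ds: "\<forall>v\<in>{0..1}. \<forall>s\<in>{0..1}.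
                 ((\<lambda>r. bv v r) has_real_derivative bvs v s) (at s within {0..1})"
    and bs_dv: "\<forall>v\<in>{0..1}. \<forall>s\<in>{0..1}.
                 ((\<lambda>w. bs w s) has_real_derivative bvs v s) (at v within {0..1})"
    and bvs_cont: "continuous_on ({0..1} \<times> {0..1}) (\<lambda>(v, s). bvs v s)"
    and b_incr: "\<forall>s\<in>{0..1}. strict_mono_on {0..1} (\<lambda>v. b v s)"
    and b_init: "\<forall>s\<in>{0..1}. b 0 s = 0"
    and b_ode: "\<forall>v\<in>{0<..1}. \<forall>s\<in>{0..1}. s - b v s \<in> {0..1} \<longrightarrow>
                 bv v s = (real (n - 1) * F v ^ (n - 2) * f v) / (F v ^ (n - 1))
                          * ((c (s - b v s) * v - b v s) / (1 + dc (s - b v s) * v))"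
  shows "\<forall>v\<in>{0..1}. \<forall>s\<in>{0<..<1}. (\<forall>w\<in>{0..v}. b w s < s) \<longrightarrow> bs v s < 1"
proof (intro ballI impI)
  interpret dutch_phase n F f c dc ddc b bv bs bvs
    by unfold_locales (fact F_cdf(1) F_cdf(3) F_deriv c_deriv dc_deriv dc_gt b_dv b_ds bv_ds bs_dv
        b_incr b_init b_ode)+
  fix V s assume V: "V \<in> {0..1}" and s: "s \<in> {0<..<1}" and "\<forall>w\<in>{0..V}. b w s < s"
  then have "0 < margin s V" by (rule margin_pos)
  moreover have "s - b V s \<in> {0..1}"
    using b_nonneg[of V s] \<open>\<forall>w\<in>{0..V}. b w s < s\<close>[rule_format, of V] V s by auto
  then have "0 < 1 + dc (s - b V s) * V"
    using one_plus_mult_pos[of "dc (s - b V s)" V] dc_gt V by simp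
  ultimately show "bs V s < 1" by (simp add: margin_def zero_less_mult_iff)
qed

end
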